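(* (a) For every $k\ge 3$, on the range $F_k\le n<F_{k+1}$ the sequence $a(n)$ attains its minimum uniquely at $n=F_k$, i.e., $a(t)>a(F_k)$ for all $F_k<t<F_{k+1}$. (b) For every $k\ge 5$, on the range $F_k\le n<F_{k+1}$ the sequence $a(n)$ attains its maximum exactly at $n=F_k+1$ and $n=F_k+2$; in particular $a(F_k+1)=a(F_k+2)\ge a(t)$ for all $F_k\le t<F_{k+1}$, with equality only for $t\in\{F_k+1,F_k+2\}$.
   Context: Let $(F_n)_{n\ge 0}$ be the Fibonacci numbers: $F_0=0$, $F_1=1$, $F_n=F_{n-1}+F_{n-2}$ for $n\ge 2$. Define $(a(n))_{n\ge 0}$ (OEIS A105774) by $a(0)=0$, $a(1)=1$, and for $n\ge 2$, $a(n)=F_{j+1}-a(n-F_j)$, where $j\ge 2$ is the unique index with $F_j<n\le F_{j+1}$. *)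

theory Defs
  imports Main "HOL-Number_Theory.Fib"
begin

text \<open>For n \<ge> 2, fidx n is the unique j \<ge> 2 with fib j < n \<le> fib (j+1);
  we take it as the least j with n \<le> fib (j+1) (this least j satisfies fib j < n
  and j \<ge> 2 whenever n \<ge> 2).\<close>
definition fidx :: "nat \<Rightarrow> nat" where
  "fidx n = (LEAST j. n \<le> fib (Suc j))"

text \<open>OEIS A105774. The guard 0 < fib (fidx n) < n always holds for n \<ge> 2;
  it only serves to make termination evident.\<close>
function a :: "nat \<Rightarrow> int" where
  "a n = (if n = 0 then 0 else if n = 1 then 1
          else if 0 < fib (fidx n) \<and> fib (fidx n) < n
               then int (fib (Suc (fidx n))) - a (n - fib (fidx n))
          else 0)"
  by auto
termination by (relation "measure id") auto

end

theory Submission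
  imports Defs
begin

text \<open>Every n \<ge> 2 is uniquely F(j) + s with j \<ge> 2 and 0 < s \<le> F(j-1), and the recursion
  reads a(F(j) + s) = F(j+1) - a(s). By induction, 0 < a(n) < F(k) whenever n \<le> F(k) and
  k \<ge> 3. Hence a(F(k)) < F(k), while on the rest of the block
  a(F(k) + s) > F(k+1) - F(k-1) = F(k), which gives the minimum. The maximum F(k+1) - 1 is
  attained exactly where a(s) = 1, i.e. at s \<in> {1, 2}, because a(s) \<ge> 2 for s \<ge> 3.\<close>

declare a.simps [simp del]

lemma fib_Suc_eq: "0 < j \<Longrightarrow> fib (Suc j) = fib j + fib (j - 1)"
  by (cases j) simp_all

lemma le_fib_Suc: "n \<le> fib (Suc n)"
proof (induction n)
  case (Suc n)
  then show ?case
    using fib_neq_0_nat[of n] by (cases n) simp_all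
qed simp

lemma fib_3: "fib 3 = 2" and fib_4: "fib 4 = 3"
  by (simp_all add: eval_nat_numeral)

lemma fib_ge_2: "3 \<le> k \<Longrightarrow> 2 \<le> fib k"
  using fib_mono[of 3 k] by (simp add: fib_3)

lemma fidx_eq:
  assumes "2 \<le> j" "fib j < n" "n \<le> fib (Suc j)"
  shows "fidx n = j"
  unfolding fidx_def
proof (rule Least_equality)
  fix i assume "n \<le> fib (Suc i)"
  then show "j \<le> i"
    using assms(2) fib_mono[of "Suc i" j] by (meson le_less_trans not_less_eq_eq not_le)
qed (fact assms(3))

lemma fidx_bounds:
  assumes "2 \<le> n"
  shows "2 \<le> fidx n" "fib (fidx n) < n" "n \<le> fib (Suc (fidx n))"
proof -
  show upper: "n \<le> fib (Suc (fidx n))"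
    unfolding fidx_def by (rule LeastI[of _ n]) (rule le_fib_Suc)
  have minimal: "\<not> n \<le> fib (Suc i)" if "i < fidx n" for i
    using that not_less_Least unfolding fidx_def by blast
  show "2 \<le> fidx n"
    using upper assms by (cases "fidx n \<le> 1") (auto simp: le_Suc_eq)
  then show "fib (fidx n) < n"
    using minimal[of "fidx n - 1"] by simp
qed

lemma fib_block_decomp:
  assumes "2 \<le> n"
  obtains j s where "2 \<le> j" "0 < s" "s \<le> fib (j - 1)" "n = fib j + s"
proof
  let ?j = "fidx n"
  show "2 \<le> ?j" "0 < n - fib ?j" "n = fib ?j + (n - fib ?j)"
    using fidx_bounds[OF assms] by auto
  show "n - fib ?j \<le> fib (?j - 1)"
    using fidx_bounds[OF assms] fib_Suc_eq[of ?j] by simp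
qed

lemma a_1: "a 1 = 1" "a (Suc 0) = 1"
  by (simp_all add: a.simps)

lemma a_fib_add:
  assumes "2 \<le> j" "0 < s" "s \<le> fib (j - 1)"
  shows "a (fib j + s) = int (fib (Suc j)) - a s"
proof -
  have "fidx (fib j + s) = j"
    using assms fib_Suc_eq[of j] by (intro fidx_eq) auto
  moreover have "0 < fib j"
    using assms(1) fib_neq_0_nat by simp
  ultimately show ?thesis
    using assms by (subst a.simps) auto
qed

lemma a_2: "a 2 = 1"
  using a_fib_add[of 2 1] by (simp add: a_1 eval_nat_numeral)

lemma a_3: "a 3 = 2"
  using a_fib_add[of 3 1] by (simp add: a_1 fib_3 fib_4)

lemma a_range:
  assumes "0 < n" "3 \<le> k" "n \<le> fib k"
  shows "0 < a n \<and> a n < int (fib k)"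
  using assms
proof (induction n arbitrary: k rule: less_induct)
  case (less n)
  show ?case
  proof (cases "n = 1")
    case True
    then show ?thesis
      using fib_ge_2[OF less.prems(2)] by (simp add: a_1)
  next
    case False
    then have "2 \<le> n"
      using less.prems(1) by simp
    then obtain j s where j: "2 \<le> j" "0 < s" "s \<le> fib (j - 1)" "n = fib j + s"
      by (rule fib_block_decomp)
    have "s < n" "s \<le> fib (Suc j)"
      using j fib_neq_0_nat[of j] fib_Suc_eq[of j] by auto
    then have IH: "0 < a s" "a s < int (fib (Suc j))"
      using less.IH[of s "Suc j"] j(1,2) by simp_all
    have "Suc j \<le> k"
    proof (rule ccontr)
      assume "\<not> Suc j \<le> k"
      then have "fib k \<le> fib j"
        by (simp add: fib_mono)
      then show False
        using less.prems(3) j(2,4) by simp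
    qed
    then have "fib (Suc j) \<le> fib k"
      by (rule fib_mono)
    then show ?thesis
      using IH a_fib_add[OF j(1-3)] j(4) by simp
  qed
qed

lemma a_fib_add_gt:
  assumes "4 \<le> j" "0 < s" "s \<le> fib (j - 1)"
  shows "int (fib j) < a (fib j + s)"
proof -
  have "a s < int (fib (j - 1))"
    using a_range[of s "j - 1"] assms by simp
  moreover have "fib (Suc j) = fib j + fib (j - 1)"
    using assms(1) by (simp add: fib_Suc_eq)
  ultimately show ?thesis
    using a_fib_add[of j s] assms by simp
qed

lemma a_ge_2:
  assumes "3 \<le> n"
  shows "2 \<le> a n"
proof -
  from assms have "2 \<le> n"
    by simp
  then obtain j s where j: "2 \<le> j" "0 < s" "s \<le> fib (j - 1)" "n = fib j + s"
    by (rule fib_block_decomp)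
  consider "j = 2" | "j = 3" | "4 \<le> j"
    using j(1) by linarith
  then show ?thesis
  proof cases
    case 1
    then show ?thesis using j assms by simp
  next
    case 2
    then have "n = 3"
      using j by (simp add: fib_3)
    then show ?thesis by (simp add: a_3)
  next
    case 3
    then show ?thesis
      using a_fib_add_gt[OF 3 j(2,3)] fib_mono[of 4 j] j(4) by (simp add: fib_4)
  qed
qed

lemma a_block_min:
  assumes "3 \<le> k" "fib k < t" "t < fib (Suc k)"
  shows "a (fib k) < a t"
proof -
  have "0 < t - fib k" "t - fib k < fib (k - 1)"
    using assms fib_Suc_eq[of k] by auto
  then have "4 \<le> k"
    using assms(1) fib_3 by (cases "k = 3") (simp_all add: numeral_eq_Suc)
  have "int (fib k) < a t"
    using a_fib_add_gt[OF \<open>4 \<le> k\<close>, of "t - fib k"] \<open>t - fib k < fib (k - 1)\<close> assms(2) by simp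
  moreover have "a (fib k) < int (fib k)"
    using a_range[of "fib k" k] assms(1) fib_neq_0_nat[of k] by simp
  ultimately show ?thesis by simp
qed

lemma a_block_max:
  assumes "4 \<le> k" "fib k \<le> t" "t < fib (Suc k)"
  shows "a t \<le> int (fib (Suc k)) - 1 \<and> (a t = int (fib (Suc k)) - 1 \<longleftrightarrow> t \<in> {fib k + 1, fib k + 2})"
proof (cases "t = fib k")
  case True
  have "a (fib k) < int (fib k)"
    using a_range[of "fib k" k] assms(1) fib_neq_0_nat[of k] by simp
  moreover have "fib k + 2 \<le> fib (Suc k)"
    using fib_Suc_eq[of k] fib_ge_2[of "k - 1"] assms(1) by simp
  ultimately show ?thesis
    using True by auto
next
  case False
  define s where "s = t - fib k"
  have s: "0 < s" "s \<le> fib (k - 1)" "t = fib k + s"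
    using False assms fib_Suc_eq[of k] unfolding s_def by auto
  have "a t = int (fib (Suc k)) - a s"
    using a_fib_add[of k s] s assms(1) by simp
  moreover have "1 \<le> a s \<and> (a s = 1 \<longleftrightarrow> s \<in> {1, 2})"
  proof -
    consider "s = 1" | "s = 2" | "3 \<le> s"
      using s(1) by linarith
    then show ?thesis
      by cases (auto simp: a_1 a_2 dest: a_ge_2)
  qed
  ultimately show ?thesis
    using s(3) by auto
qed

theorem proposition14:
  shows "(\<forall>k\<ge>3. \<forall>t. fib k < t \<and> t < fib (Suc k) \<longrightarrow> a t > a (fib k))
       \<and> (\<forall>k\<ge>5. a (fib k + 1) = a (fib k + 2)
              \<and> (\<forall>t. fib k \<le> t \<and> t < fib (Suc k) \<longrightarrow>
                     a t \<le> a (fib k + 1)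
                     \<and> (a t = a (fib k + 1) \<longleftrightarrow> t \<in> {fib k + 1, fib k + 2})))"
proof (intro conjI allI impI)
  show "a (fib k) < a t" if "3 \<le> k" "fib k < t \<and> t < fib (Suc k)" for k t
    using a_block_min that by blast
  fix k :: nat assume k5: "5 \<le> k"
  then have k: "4 \<le> k" by simp
  have "4 \<le> k - 1"
    using k5 by simp
  then have "fib k + 2 < fib (Suc k)"
    using fib_Suc_eq[of k] fib_mono[of 4 "k - 1"] k by (simp add: fib_4)
  then have max: "a (fib k + 1) = int (fib (Suc k)) - 1" "a (fib k + 2) = int (fib (Suc k)) - 1"
    using a_block_max[OF k] by auto
  then show "a (fib k + 1) = a (fib k + 2)" by simp
  fix t assume "fib k \<le> t \<and> t < fib (Suc k)"
  then show "a t \<le> a (fib k + 1)" "a t = a (fib k + 1) \<longleftrightarrow> t \<in> {fib k + 1, fib k + 2}"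
    using a_block_max[OF k] max(1) by auto
qed

end
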